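(* Let $m_2>m_1\ge1$ be integers and consider tilings with $(\frac12,\frac12;m_1)$- and $(\frac12,\frac12;m_2)$-combs. The mixed metatiles occur in pairs, whereby one element of the pair is generated from the other by interchanging the contents of the two slots in each cell; that is, this interchange operation maps every mixed metatile of length $l$ to a mixed metatile of length $l$ that is different from it.
   Context: An $n$-board is the strip $[0,n]\times[0,1]$ divided into unit cells $[k-1,k]\times[0,1]$, $k=1,\dots,n$; each cell consists of a left slot $[k-1,k-\frac12]\times[0,1]$ and a right slot $[k-\frac12,k]\times[0,1]$. A $(w,g;t)$-comb is a tile consisting of a row of $t$ rectangles (teeth) of size $w\times1$, consecutive teeth separated by a gap of width $g$; gaps are not part of the tile and may be occupied by other tiles. A tiling is a placement of translated (unrotated) combs whose teeth cover the board exactly without overlap. Given a tiling of an $n$-board, an integer $x$ with $0<x<n$ is a cut point if every comb has all of its teeth in $[0,x]$ or all in $[x,n]$. A metatile of length $l$ is a tiling of an $l$-board with no cut point (every tiling splits uniquely at its cut points into a sequence of metatiles). A metatile is mixed if it contains combs of more than one type. *)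

theory Defs
  imports Main
begin

text \<open>Slots of an n-board are numbered 0..2n-1 (slot j is [j/2,(j+1)/2]);
cell k (1-based) consists of slots 2(k-1) (left) and 2k-1 (right).
A (1/2,1/2;t)-comb placed with first tooth on slot a is the pair (a,t);
its teeth occupy the slots a, a+2, ..., a+2(t-1).\<close>

type_synonym comb = "nat \<times> nat"

definition teeth :: "comb \<Rightarrow> nat set" where
  "teeth c = {fst c + 2 * i | i. i < snd c}"

definition is_tiling :: "nat set \<Rightarrow> nat \<Rightarrow> comb set \<Rightarrow> bool" where
  "is_tiling ts n T \<longleftrightarrow>
     (\<forall>c\<in>T. snd c \<in> ts) \<and>
     (\<forall>c\<in>T. \<forall>d\<in>T. c \<noteq> d \<longrightarrow> teeth c \<inter> teeth d = {}) \<and>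
     (\<Union>c\<in>T. teeth c) = {..<2 * n}"

definition cut_point :: "nat \<Rightarrow> comb set \<Rightarrow> nat \<Rightarrow> bool" where
  "cut_point n T x \<longleftrightarrow> 0 < x \<and> x < n \<and>
     (\<forall>c\<in>T. teeth c \<subseteq> {..<2 * x} \<or> teeth c \<subseteq> {2 * x..})"

definition metatile :: "nat set \<Rightarrow> nat \<Rightarrow> comb set \<Rightarrow> bool" where
  "metatile ts l T \<longleftrightarrow> is_tiling ts l T \<and> \<not> (\<exists>x. cut_point l T x)"

definition mixed :: "comb set \<Rightarrow> bool" where
  "mixed T \<longleftrightarrow> (\<exists>c\<in>T. \<exists>d\<in>T. snd c \<noteq> snd d)"

definition swap_slot :: "nat \<Rightarrow> nat" where
  "swap_slot j = (if even j then j + 1 else j - 1)"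

definition swap_tiling :: "comb set \<Rightarrow> comb set" where
  "swap_tiling T = {c'. \<exists>c\<in>T. snd c' = snd c \<and> teeth c' = swap_slot ` teeth c}"

end

theory Submission
  imports Defs
begin

text \<open>The slot interchange is an involution of the slots that fixes every cell, so it maps
tilings to tilings with the same cut points and the same comb types. If it fixed a tiling,
the comb with a tooth on slot 0, say with t teeth, would come with its mirror image starting
on slot 1; these two combs fill the first t cells exactly, so t would be a cut point unless
they were the whole tiling, which is then not mixed.\<close>

lemma mem_teeth: "j \<in> teeth c \<longleftrightarrow> (\<exists>i<snd c. j = fst c + 2 * i)"
  unfolding teeth_def by auto

lemma teeth_eq_image: "teeth (a, t) = (\<lambda>i. a + 2 * i) ` {..<t}"
  unfolding teeth_def by auto

lemma fst_mem_teeth: "0 < snd c \<Longrightarrow> fst c \<in> teeth c"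
  unfolding mem_teeth by force

lemma teeth_inject:
  assumes "0 < t" and "teeth (a, t) = teeth (b, t)"
  shows "a = b"
proof -
  have "a \<in> teeth (b, t)" and "b \<in> teeth (a, t)"
    using assms fst_mem_teeth[of "(a, t)"] fst_mem_teeth[of "(b, t)"] by auto
  then show ?thesis
    unfolding mem_teeth by fastforce
qed

lemma teeth_0_Un_teeth_1: "teeth (0, t) \<union> teeth (1, t) = {..<2 * t}"
proof -
  have "j \<in> teeth (0, t) \<union> teeth (1, t)" if "j < 2 * t" for j
  proof (cases "even j")
    case True
    then have "j \<in> teeth (0, t)"
      unfolding mem_teeth using that by (intro exI[of _ "j div 2"]) auto
    then show ?thesis ..
  next
    case False
    then have "j = 1 + 2 * (j div 2)"
      by presburger
    then have "j \<in> teeth (1, t)"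
      unfolding mem_teeth using that by (intro exI[of _ "j div 2"]) auto
    then show ?thesis ..
  qed
  moreover have "teeth (0, t) \<union> teeth (1, t) \<subseteq> {..<2 * t}"
    by (auto simp: mem_teeth)
  ultimately show ?thesis
    by blast
qed

lemma swap_slot_swap_slot [simp]: "swap_slot (swap_slot j) = j"
  unfolding swap_slot_def by auto

lemma inj_swap_slot: "inj swap_slot"
  by (metis injI swap_slot_swap_slot)

lemma swap_slot_less_iff [simp]: "swap_slot j < 2 * x \<longleftrightarrow> j < 2 * x"
  unfolding swap_slot_def by (auto, presburger+)

lemma swap_slot_add_even: "swap_slot (a + 2 * i) = swap_slot a + 2 * i"
  unfolding swap_slot_def by (cases "a = 0") auto

lemma swap_slot_image_lessThan: "swap_slot ` {..<2 * n} = {..<2 * n}"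
  by (auto intro: image_eqI[of _ swap_slot "swap_slot _"])

definition swap_comb :: "comb \<Rightarrow> comb" where
  "swap_comb c = (swap_slot (fst c), snd c)"

lemma snd_swap_comb [simp]: "snd (swap_comb c) = snd c"
  by (simp add: swap_comb_def)

lemma teeth_swap_comb: "teeth (swap_comb c) = swap_slot ` teeth c"
  by (cases c) (simp add: swap_comb_def teeth_eq_image image_image swap_slot_add_even)

text \<open>The positivity hypothesis matters: a toothless comb (a, 0) would be swapped into every
comb (a', 0).\<close>

lemma swap_tiling_eq_image:
  assumes "\<forall>c\<in>T. 0 < snd c"
  shows "swap_tiling T = swap_comb ` T"
proof
  show "swap_tiling T \<subseteq> swap_comb ` T"
  proof
    fix c' assume "c' \<in> swap_tiling T"
    then obtain c where c: "c \<in> T" "snd c' = snd c" "teeth c' = swap_slot ` teeth c"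
      unfolding swap_tiling_def by auto
    then have "teeth (fst c', snd c) = teeth (fst (swap_comb c), snd c)"
      using teeth_swap_comb[of c] by (metis prod.collapse snd_swap_comb)
    then have "fst c' = fst (swap_comb c)"
      using teeth_inject assms c(1) by blast
    then have "c' = swap_comb c"
      using c(2) by (simp add: prod_eq_iff)
    then show "c' \<in> swap_comb ` T"
      using c(1) by blast
  qed
  show "swap_comb ` T \<subseteq> swap_tiling T"
    by (force simp: swap_tiling_def teeth_swap_comb)
qed

lemma is_tiling_swap_comb:
  assumes "is_tiling ts n T"
  shows "is_tiling ts n (swap_comb ` T)"
  unfolding is_tiling_def
proof (intro conjI)
  show "\<forall>c\<in>swap_comb ` T. snd c \<in> ts"
    using assms by (simp add: is_tiling_def)
  have "teeth (swap_comb c) \<inter> teeth (swap_comb d) = {}"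
    if "c \<in> T" "d \<in> T" "swap_comb c \<noteq> swap_comb d" for c d
  proof -
    have "c \<noteq> d"
      using that(3) by blast
    then have "teeth c \<inter> teeth d = {}"
      using assms that(1,2) unfolding is_tiling_def by blast
    then show ?thesis
      by (simp add: teeth_swap_comb image_Int[OF inj_swap_slot, symmetric])
  qed
  then show "\<forall>c\<in>swap_comb ` T. \<forall>d\<in>swap_comb ` T. c \<noteq> d \<longrightarrow> teeth c \<inter> teeth d = {}"
    by blast
  have "(\<Union>c\<in>T. teeth (swap_comb c)) = swap_slot ` (\<Union>c\<in>T. teeth c)"
    by (simp add: teeth_swap_comb image_UN)
  also have "\<dots> = {..<2 * n}"
    using assms swap_slot_image_lessThan[of n] by (simp add: is_tiling_def)
  finally show "(\<Union>c\<in>swap_comb ` T. teeth c) = {..<2 * n}"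
    by simp
qed

lemma cut_point_swap_comb_iff: "cut_point n (swap_comb ` T) x \<longleftrightarrow> cut_point n T x"
proof -
  have below: "swap_slot ` A \<subseteq> {..<2 * x} \<longleftrightarrow> A \<subseteq> {..<2 * x}" for A
    by auto
  have above: "swap_slot ` A \<subseteq> {2 * x..} \<longleftrightarrow> A \<subseteq> {2 * x..}" for A
    by (auto simp: not_less[symmetric])
  show ?thesis
    unfolding cut_point_def by (simp add: teeth_swap_comb below above)
qed

lemma metatile_swap_comb: "metatile ts l T \<Longrightarrow> metatile ts l (swap_comb ` T)"
  unfolding metatile_def by (simp add: is_tiling_swap_comb cut_point_swap_comb_iff)

lemma mixed_image_iff:
  assumes "\<And>c. snd (f c) = snd c"
  shows "mixed (f ` T) \<longleftrightarrow> mixed T"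
  unfolding mixed_def using assms by auto

lemma not_mixed_subset_pair: "\<not> mixed T" if "T \<subseteq> {(a, t), (b, t)}"
proof -
  have "\<forall>c\<in>T. snd c = t"
    using that by auto
  then show ?thesis
    unfolding mixed_def by auto
qed

lemma is_tiling_beyond_first_cells:
  assumes "is_tiling ts n T" and "(0, t) \<in> T" and "(1, t) \<in> T"
    and "e \<in> T" and "e \<notin> {(0, t), (1, t)}"
  shows "teeth e \<subseteq> {2 * t..}"
proof -
  have "teeth e \<inter> teeth (0, t) = {}" and "teeth e \<inter> teeth (1, t) = {}"
    using assms unfolding is_tiling_def by auto
  then have "teeth e \<inter> {..<2 * t} = {}"
    using teeth_0_Un_teeth_1[of t] by blast
  then show ?thesis
    by (auto simp: not_less[symmetric])
qed

lemma is_tiling_snd_pos: "is_tiling ts n T \<Longrightarrow> 0 \<notin> ts \<Longrightarrow> c \<in> T \<Longrightarrow> 0 < snd c"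
  unfolding is_tiling_def by (metis gr0I)

lemma metatile_swap_comb_fixed:
  assumes meta: "metatile ts l T" and pos: "0 \<notin> ts" and fixed: "swap_comb ` T = T"
  shows "\<exists>t. T \<subseteq> {(0, t), (1, t)}"
proof -
  have tiling: "is_tiling ts l T"
    using meta by (simp add: metatile_def)
  have fst_teeth: "fst c \<in> teeth c" "teeth c \<subseteq> {..<2 * l}" if "c \<in> T" for c
    using fst_mem_teeth is_tiling_snd_pos[OF tiling pos that] tiling that
    unfolding is_tiling_def by auto
  show ?thesis
  proof (cases "T = {}")
    case False
    then have "0 < l"
      using fst_teeth by fastforce
    then have "0 \<in> (\<Union>c\<in>T. teeth c)"
      using tiling unfolding is_tiling_def by simp
    then obtain c0 where "c0 \<in> T" and "0 \<in> teeth c0"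
      by blast
    then obtain t where first: "(0, t) \<in> T"
      unfolding mem_teeth by (metis add_is_0 prod.collapse)
    have "swap_comb (0, t) = (1, t)"
      by (simp add: swap_comb_def swap_slot_def)
    then have mirror: "(1, t) \<in> T"
      using fixed first by (metis image_eqI)
    have "T \<subseteq> {(0, t), (1, t)}"
    proof (rule ccontr)
      assume "\<not> ?thesis"
      then obtain e where e: "e \<in> T" "e \<notin> {(0, t), (1, t)}"
        by blast
      have beyond: "teeth c \<subseteq> {2 * t..}" if "c \<in> T" "c \<notin> {(0, t), (1, t)}" for c
        using is_tiling_beyond_first_cells[OF tiling first mirror that] .
      have "2 * t \<le> fst e" and "fst e < 2 * l"
        using fst_teeth[OF e(1)] beyond[OF e] by auto
      then have "t < l"
        by simp
      moreover have "0 < t"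
        using is_tiling_snd_pos[OF tiling pos first] by simp
      moreover have "teeth c \<subseteq> {..<2 * t} \<or> teeth c \<subseteq> {2 * t..}" if "c \<in> T" for c
        using beyond[OF that] teeth_0_Un_teeth_1[of t] by blast
      ultimately have "cut_point l T t"
        unfolding cut_point_def by blast
      then show False
        using meta unfolding metatile_def by blast
    qed
    then show ?thesis ..
  qed simp
qed

theorem lemma1:
  fixes m1 m2 l :: nat and T :: "comb set"
  assumes "1 \<le> m1" and "m1 < m2"
    and "metatile {m1, m2} l T" and "mixed T"
  shows "metatile {m1, m2} l (swap_tiling T) \<and> mixed (swap_tiling T)
         \<and> swap_tiling T \<noteq> T"
proof -
  have no_empty_comb: "0 \<notin> {m1, m2}"
    using assms(1,2) by auto
  have "\<forall>c\<in>T. 0 < snd c"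
    using assms(3) no_empty_comb is_tiling_snd_pos unfolding metatile_def by blast
  then have swap: "swap_tiling T = swap_comb ` T"
    by (rule swap_tiling_eq_image)
  have "swap_comb ` T \<noteq> T"
    using metatile_swap_comb_fixed[OF assms(3) no_empty_comb] not_mixed_subset_pair assms(4) by blast
  then show ?thesis
    unfolding swap using assms(3,4) by (simp add: metatile_swap_comb mixed_image_iff)
qed

end
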